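(* Let $(S,\mathsf d)$ be a complete separable metric space and $\mathbf p$ a Borel probability measure on $S$; let $\varepsilon>0$, $k\in\mathbb{N}$, and let $X_1,\dots,X_k$ be i.i.d. with law $\mathbf p$. Let $C_1,\dots,C_k$ be pairwise disjoint sets with $C_i\subset B(X_i,\varepsilon)$ and $\bigcup_iC_i=\bigcup_iB(X_i,\varepsilon)$, and set \[\mathbf p^{k,\varepsilon}:=\frac{1}{\sum_{i=1}^k\mathbf p(C_i)}\sum_{i=1}^k\mathbf p(C_i)\delta_{X_i}.\] Then $\mathbb E[\mathrm d_{BL}(\mathbf p,\mathbf p^{k,\varepsilon})]\le\varepsilon\,p_{\varepsilon,k}+2(1-p_{\varepsilon,k})$.
   Context: $B(x,\varepsilon)=\{y:\mathsf d(x,y)<\varepsilon\}$. $p_{\varepsilon,k}:=\mathbb P(X\in\bigcup_{i=1}^kB(X_i,\varepsilon))$ with $X,X_1,\dots,X_k$ i.i.d. with law $\mathbf p$. For bounded Lipschitz $\varphi$, $\|\varphi\|_{BL}:=\|\varphi\|_\infty+\mathrm{Lip}(\varphi)$, and $\mathrm d_{BL}(\mathbf p,\mathbf p'):=\sup\{|\int\varphi\,d\mathbf p-\int\varphi\,d\mathbf p'|:\|\varphi\|_{BL}\le1\}$. *)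

theory Defs
  imports "HOL-Probability.Probability"
begin

definition sup_norm :: "('a \<Rightarrow> real) \<Rightarrow> real" where
  "sup_norm \<phi> = (SUP x. \<bar>\<phi> x\<bar>)"

definition lip_const :: "('a::metric_space \<Rightarrow> real) \<Rightarrow> real" where
  "lip_const \<phi> = Inf {L. lipschitz_on L UNIV \<phi>}"

definition BL_norm :: "('a::metric_space \<Rightarrow> real) \<Rightarrow> real" where
  "BL_norm \<phi> = sup_norm \<phi> + lip_const \<phi>"

definition bounded_lipschitz :: "('a::metric_space \<Rightarrow> real) \<Rightarrow> bool" where
  "bounded_lipschitz \<phi> \<longleftrightarrow> bounded (range \<phi>) \<and> (\<exists>L. lipschitz_on L UNIV \<phi>)"

definition d_BL :: "'a::metric_space measure \<Rightarrow> 'a measure \<Rightarrow> real" where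
  "d_BL P Q = (SUP \<phi> \<in> {\<phi>. bounded_lipschitz \<phi> \<and> BL_norm \<phi> \<le> 1}.
                 \<bar>(\<integral>x. \<phi> x \<partial>P) - (\<integral>x. \<phi> x \<partial>Q)\<bar>)"

definition weighted_diracs :: "nat \<Rightarrow> (nat \<Rightarrow> real) \<Rightarrow> (nat \<Rightarrow> 'a::topological_space) \<Rightarrow> 'a measure" where
  "weighted_diracs k w x =
     measure_of (space borel) (sets borel) (\<lambda>A. \<Sum>i<k. ennreal (w i) * indicator A (x i))"

text \<open>p_{eps,k} = P(X_0 \<in> \<Union>_{i=1..k} B(X_i,eps)) for X_0,...,X_k i.i.d. with law p
  (realised on the canonical product space).\<close>
definition p_cover :: "'a::metric_space measure \<Rightarrow> real \<Rightarrow> nat \<Rightarrow> real" where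
  "p_cover p \<epsilon> k = measure (PiM {..k} (\<lambda>_. p))
      {\<omega> \<in> space (PiM {..k} (\<lambda>_. p)). \<omega> 0 \<in> (\<Union>i\<in>{1..k}. ball (\<omega> i) \<epsilon>)}"

end

theory Submission
  imports Defs
begin

(*
  Fix a sample and let m be the p-mass of the union of the balls B(X_i, eps); since the C_i
  partition this union, m is also the total weight sum_i p(C_i).  For a test function phi of
  BL-norm at most 1, compare its p-integral with that of the step function
  sum_i phi(X_i) 1_{C_i}: phi is 1-Lipschitz, so on C_i it stays within eps of phi(X_i), and
  off the union |phi| <= 1; the error is at most eps m + (1 - m).  Renormalising the weights
  p(C_i) to total mass one costs at most another 1 - m.  Hence d_BL(p, p^{k,eps}) is bounded
  by eps m + 2 (1 - m), an affine function of m, and by independence E[m] is the probability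
  that a further independent sample X_0 falls into the union of the balls, i.e. p_{eps,k}.
*)

lemma weighted_diracs_eq_distr:
  fixes x :: "nat \<Rightarrow> 'a::topological_space"
  shows "weighted_diracs k w x = distr (point_measure {..<k} (\<lambda>i. ennreal (w i))) borel x"
proof -
  let ?N = "distr (point_measure {..<k} (\<lambda>i. ennreal (w i))) borel x"
  have "?N = measure_of (space borel) (sets borel) (emeasure ?N)"
    using measure_of_of_measure[of ?N] by simp
  also have "\<dots> = weighted_diracs k w x"
    unfolding weighted_diracs_def
  proof (rule measure_of_eq)
    fix A :: "'a set" assume "A \<in> sigma_sets (space borel) (sets borel)"
    then have A: "A \<in> sets borel" by (metis sets.sigma_sets_eq space_borel)
    have "emeasure ?N A = (\<Sum>i\<in>x -` A \<inter> {..<k}. ennreal (w i))"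
      using A by (simp add: emeasure_distr space_point_measure emeasure_point_measure_finite)
    also have "\<dots> = (\<Sum>i<k. ennreal (w i) * indicator A (x i))"
      by (auto simp: sum.inter_restrict indicator_def Int_commute vimage_def Collect_conj_eq)
    finally show "emeasure ?N A = (\<Sum>i<k. ennreal (w i) * indicator A (x i))" .
  qed simp
  finally show ?thesis by simp
qed

lemma integral_weighted_diracs:
  fixes x :: "nat \<Rightarrow> 'a::topological_space"
  assumes "\<And>i. i < k \<Longrightarrow> w i \<ge> 0" and "f \<in> borel_measurable borel"
  shows "(\<integral>y. f y \<partial>weighted_diracs k w x) = (\<Sum>i<k. w i * f (x i))"
proof -
  have "(\<integral>y. f y \<partial>weighted_diracs k w x) = (\<integral>i. f (x i) \<partial>point_measure {..<k} (\<lambda>i. ennreal (w i)))"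
    unfolding weighted_diracs_eq_distr using assms(2) by (subst integral_distr) auto
  also have "\<dots> = (\<Sum>i<k. w i * f (x i))"
    using assms(1) by (subst lebesgue_integral_point_measure_finite) auto
  finally show ?thesis .
qed

lemma abs_le_sup_norm:
  assumes "bounded (range \<phi>)"
  shows "\<bar>\<phi> x\<bar> \<le> sup_norm \<phi>"
  unfolding sup_norm_def
  using assms by (intro cSUP_upper) (auto simp: bounded_iff bdd_above_def)

lemma lipschitz_on_lip_const:
  assumes "lipschitz_on L UNIV \<phi>"
  shows "lipschitz_on (lip_const \<phi>) UNIV \<phi>"
proof (rule lipschitz_onI)
  have ne: "{L. lipschitz_on L UNIV \<phi>} \<noteq> {}" using assms by auto
  show "0 \<le> lip_const \<phi>"
    unfolding lip_const_def by (rule cInf_greatest[OF ne]) (auto dest: lipschitz_on_nonneg)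
  fix x y :: 'a
  show "dist (\<phi> x) (\<phi> y) \<le> lip_const \<phi> * dist x y"
  proof (cases "x = y")
    case False
    then have "dist (\<phi> x) (\<phi> y) / dist x y \<le> lip_const \<phi>"
      unfolding lip_const_def
      by (intro cInf_greatest[OF ne]) (auto simp: pos_divide_le_eq dest: lipschitz_onD)
    with False show ?thesis by (simp add: pos_divide_le_eq)
  qed simp
qed

lemma BL_unit_ballD:
  assumes "bounded_lipschitz \<phi>" and "BL_norm \<phi> \<le> 1"
  shows "\<bar>\<phi> x\<bar> \<le> 1" and "lipschitz_on 1 UNIV \<phi>"
proof -
  obtain L where "lipschitz_on L UNIV \<phi>"
    using assms(1) unfolding bounded_lipschitz_def by blast
  then have lip: "lipschitz_on (lip_const \<phi>) UNIV \<phi>" by (rule lipschitz_on_lip_const)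
  have sup: "\<bar>\<phi> y\<bar> \<le> sup_norm \<phi>" for y
    using assms(1) unfolding bounded_lipschitz_def by (blast intro: abs_le_sup_norm)
  have "0 \<le> lip_const \<phi>" "0 \<le> sup_norm \<phi>"
    using lipschitz_on_nonneg[OF lip] order_trans[OF abs_ge_zero sup] by auto
  with assms(2) have "sup_norm \<phi> \<le> 1" "lip_const \<phi> \<le> 1"
    unfolding BL_norm_def by auto
  then show "\<bar>\<phi> x\<bar> \<le> 1" "lipschitz_on 1 UNIV \<phi>"
    using sup[of x] lipschitz_on_le[OF lip] by auto
qed

lemma d_BL_leI:
  fixes P Q :: "'a::metric_space measure"
  assumes "\<And>\<phi>. bounded_lipschitz \<phi> \<Longrightarrow> BL_norm \<phi> \<le> 1 \<Longrightarrow>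
             \<bar>(\<integral>x. \<phi> x \<partial>P) - (\<integral>x. \<phi> x \<partial>Q)\<bar> \<le> c"
  shows "d_BL P Q \<le> c"
proof -
  have "{L. lipschitz_on L UNIV (\<lambda>_::'a. 0::real)} = {0..}"
    by (auto simp: lipschitz_on_def)
  then have "bounded_lipschitz (\<lambda>_::'a. 0::real) \<and> BL_norm (\<lambda>_::'a. 0::real) \<le> 1"
    by (auto simp: bounded_lipschitz_def BL_norm_def sup_norm_def lip_const_def)
  then show ?thesis
    unfolding d_BL_def using assms by (intro cSUP_least) auto
qed

lemma (in prob_space) abs_integral_diff_step_function_le:
  fixes f :: "'a \<Rightarrow> real"
  assumes f: "f \<in> borel_measurable M" "\<And>y. y \<in> space M \<Longrightarrow> \<bar>f y\<bar> \<le> B"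
    and C: "finite I" "\<And>i. i \<in> I \<Longrightarrow> C i \<in> sets M" "disjoint_family_on C I"
    and close: "\<And>i y. i \<in> I \<Longrightarrow> y \<in> C i \<Longrightarrow> \<bar>f y - c i\<bar> \<le> \<epsilon>"
  shows "\<bar>(\<integral>y. f y \<partial>M) - (\<Sum>i\<in>I. measure M (C i) * c i)\<bar>
         \<le> \<epsilon> * measure M (\<Union>i\<in>I. C i) + B * (1 - measure M (\<Union>i\<in>I. C i))"
proof -
  define U where "U = (\<Union>i\<in>I. C i)"
  define s where "s y = (\<Sum>i\<in>I. c i * indicator (C i) y)" for y
  define g where "g y = B + (\<epsilon> - B) * indicator U y" for y :: 'a
  have U: "U \<in> sets M" unfolding U_def using C by blast
  have s_int: "integrable M s"
    unfolding s_def using C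
    by (intro Bochner_Integration.integrable_sum integrable_mult_right integrable_real_indicator)
       (auto simp: emeasure_eq_measure)
  have g_int: "integrable M g"
    unfolding g_def using U by (auto simp: emeasure_eq_measure)
  have "\<bar>f y - s y\<bar> \<le> g y" if y: "y \<in> space M" for y
  proof (cases "y \<in> U")
    case True
    then obtain j where j: "j \<in> I" "y \<in> C j" unfolding U_def by blast
    have "y \<notin> C i" if "i \<in> I - {j}" for i
      using C(3) j that unfolding disjoint_family_on_def by blast
    then have "s y = c j"
      unfolding s_def using j by (subst sum.remove[OF C(1) j(1)]) (auto intro!: sum.neutral)
    with close[OF j] True show ?thesis by (simp add: g_def)
  next
    case False
    then have "s y = 0" unfolding s_def U_def by (auto intro!: sum.neutral)
    with f(2)[OF y] False show ?thesis by (simp add: g_def)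
  qed
  moreover have f_int: "integrable M f"
    using f by (intro integrable_const_bound[where B=B]) auto
  ultimately have "\<bar>(\<integral>y. f y - s y \<partial>M)\<bar> \<le> (\<integral>y. g y \<partial>M)"
    using s_int g_int by (intro order_trans[OF integral_abs_bound] integral_mono) auto
  moreover have "(\<integral>y. s y \<partial>M) = (\<Sum>i\<in>I. measure M (C i) * c i)"
    unfolding s_def using C
    by (subst Bochner_Integration.integral_sum) (auto simp: mult.commute emeasure_eq_measure)
  moreover have "(\<integral>y. g y \<partial>M) = \<epsilon> * measure M U + B * (1 - measure M U)"
    unfolding g_def using U
    by (subst Bochner_Integration.integral_add) (auto simp: prob_space emeasure_eq_measure algebra_simps)
  ultimately show ?thesis unfolding U_def using s_int f_int by simp
qed

lemma abs_diff_divide_self_le: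
  fixes t m :: real
  assumes "\<bar>t\<bar> \<le> m" and "m \<le> 1"
  shows "\<bar>t - t / m\<bar> \<le> 1 - m"
proof (cases "m = 0")
  case False
  with assms have m: "m > 0" by linarith
  have "t - t / m = - (t * (1 - m) / m)"
    using m by (simp add: field_simps)
  then have "\<bar>t - t / m\<bar> = \<bar>t\<bar> * (1 - m) / m"
    using m assms(2) by (simp add: abs_mult)
  also have "\<dots> \<le> m * (1 - m) / m"
    using assms m by (intro divide_right_mono mult_right_mono) auto
  finally show ?thesis using m by simp
qed (use assms in simp)

lemma abs_integral_diff_weighted_diracs_le:
  fixes p :: "'a::metric_space measure" and x :: "nat \<Rightarrow> 'a" and \<phi> :: "'a \<Rightarrow> real"
  assumes p: "prob_space p" "sets p = sets borel"
    and C_sets: "\<And>i. i < k \<Longrightarrow> C i \<in> sets borel"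
    and C_disj: "disjoint_family_on C {..<k}"
    and C_sub: "\<And>i. i < k \<Longrightarrow> C i \<subseteq> ball (x i) \<epsilon>"
    and \<phi>: "\<And>y. \<bar>\<phi> y\<bar> \<le> 1" "lipschitz_on 1 UNIV \<phi>"
  shows "\<bar>(\<integral>y. \<phi> y \<partial>p) -
          (\<integral>y. \<phi> y \<partial>weighted_diracs k (\<lambda>i. measure p (C i) / (\<Sum>j<k. measure p (C j))) x)\<bar>
         \<le> \<epsilon> * measure p (\<Union>i<k. C i) + 2 * (1 - measure p (\<Union>i<k. C i))"
proof -
  interpret prob_space p by (rule p(1))
  define m where "m = (\<Sum>j<k. measure p (C j))"
  define t where "t = (\<Sum>i<k. measure p (C i) * \<phi> (x i))"
  have m_eq: "m = measure p (\<Union>i<k. C i)"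
    unfolding m_def using C_sets p(2) C_disj by (intro measure_finite_Union[symmetric]) auto
  have \<phi>_borel: "\<phi> \<in> borel_measurable borel"
    using \<phi>(2) by (intro borel_measurable_continuous_onI lipschitz_on_continuous_on)
  have "\<phi> \<in> borel_measurable p"
    unfolding measurable_cong_sets[OF p(2) refl] by (rule \<phi>_borel)
  moreover have "C i \<in> sets p" if "i < k" for i
    using C_sets[OF that] p(2) by simp
  moreover have "\<bar>\<phi> y - \<phi> (x i)\<bar> \<le> \<epsilon>" if "i \<in> {..<k}" "y \<in> C i" for i y
  proof -
    have "dist y (x i) < \<epsilon>"
      using C_sub that by (metis lessThan_iff subsetD mem_ball dist_commute)
    then show ?thesis using lipschitz_onD[OF \<phi>(2), of y "x i"] by (simp add: dist_real_def)
  qed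
  ultimately have "\<bar>(\<integral>y. \<phi> y \<partial>p) - t\<bar> \<le> \<epsilon> * m + 1 * (1 - m)"
    unfolding t_def m_eq using \<phi>(1) C_disj by (intro abs_integral_diff_step_function_le) auto
  moreover have "\<bar>t - t / m\<bar> \<le> 1 - m"
  proof (rule abs_diff_divide_self_le)
    show "\<bar>t\<bar> \<le> m"
      unfolding t_def m_def
      using \<phi>(1) by (intro order_trans[OF sum_abs] sum_mono) (simp add: abs_mult mult_left_le)
    show "m \<le> 1" unfolding m_eq by simp
  qed
  moreover have "(\<integral>y. \<phi> y \<partial>weighted_diracs k (\<lambda>i. measure p (C i) / m) x) = t / m"
    unfolding t_def using \<phi>_borel m_eq
    by (subst integral_weighted_diracs) (auto simp: sum_divide_distrib)
  ultimately show ?thesis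
    unfolding m_def[symmetric] m_eq[symmetric] by (simp add: abs_le_iff)
qed

lemma d_BL_weighted_diracs_le:
  fixes p :: "'a::metric_space measure" and x :: "nat \<Rightarrow> 'a"
  assumes "prob_space p" "sets p = sets borel"
    and "\<And>i. i < k \<Longrightarrow> C i \<in> sets borel"
    and "\<And>i j. i < k \<Longrightarrow> j < k \<Longrightarrow> i \<noteq> j \<Longrightarrow> C i \<inter> C j = {}"
    and "\<And>i. i < k \<Longrightarrow> C i \<subseteq> ball (x i) \<epsilon>"
  shows "d_BL p (weighted_diracs k (\<lambda>i. measure p (C i) / (\<Sum>j<k. measure p (C j))) x)
         \<le> \<epsilon> * measure p (\<Union>i<k. C i) + 2 * (1 - measure p (\<Union>i<k. C i))"
  using assms
  by (intro d_BL_leI abs_integral_diff_weighted_diracs_le BL_unit_ballD)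
     (auto simp: disjoint_family_on_def)

lemma sets_Collect_Bex_dist_less:
  fixes f :: "'i \<Rightarrow> 'b \<Rightarrow> 'a::{metric_space, second_countable_topology}"
  assumes "finite I" and "\<And>i. i \<in> I \<Longrightarrow> f i \<in> borel_measurable M" and "g \<in> borel_measurable M"
  shows "{x \<in> space M. \<exists>i\<in>I. dist (f i x) (g x) < \<epsilon>} \<in> sets M"
proof -
  have "Measurable.pred M (\<lambda>x. \<exists>i\<in>I. dist (f i x) (g x) < \<epsilon>)"
  proof (rule pred_intros_finite(4)[OF assms(1)])
    fix i assume "i \<in> I"
    with assms(2,3) show "Measurable.pred M (\<lambda>x. dist (f i x) (g x) < \<epsilon>)" by measurable
  qed
  then show ?thesis unfolding pred_def .
qed

lemma measurable_measure_Union_balls: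
  fixes p :: "'a::{metric_space, second_countable_topology} measure"
  assumes p: "finite_measure p" "sets p = sets borel" and I: "finite I"
  shows "(\<lambda>f. measure p (\<Union>i\<in>I. ball (f i) \<epsilon>)) \<in> borel_measurable (\<Pi>\<^sub>M i\<in>I. p)"
proof -
  interpret finite_measure p by (rule p(1))
  let ?P = "(\<Pi>\<^sub>M i\<in>I. p) \<Otimes>\<^sub>M p"
  define Q where "Q = {z \<in> space ?P. \<exists>i\<in>I. dist (fst z i) (snd z) < \<epsilon>}"
  have "Q \<in> sets ?P"
    unfolding Q_def using I
    by (intro sets_Collect_Bex_dist_less) (auto simp: measurable_cong_sets[OF refl p(2), symmetric])
  then have "(\<lambda>f. emeasure p (Pair f -` Q)) \<in> borel_measurable (\<Pi>\<^sub>M i\<in>I. p)"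
    by (rule measurable_emeasure_Pair)
  moreover have "Pair f -` Q = (\<Union>i\<in>I. ball (f i) \<epsilon>)" if "f \<in> space (\<Pi>\<^sub>M i\<in>I. p)" for f
    using that sets_eq_imp_space_eq[OF p(2)] by (auto simp: Q_def space_pair_measure mem_ball)
  ultimately show ?thesis
    by (subst measurable_cong[where g="\<lambda>f. enn2real (emeasure p (Pair f -` Q))"])
       (auto simp: measure_def)
qed

lemma nn_integral_PiM_shift:
  assumes "prob_space M" and F: "F \<in> borel_measurable (\<Pi>\<^sub>M i\<in>{..<k}. M)"
  shows "(\<integral>\<^sup>+f. F f \<partial>(\<Pi>\<^sub>M i\<in>{..<k}. M)) = (\<integral>\<^sup>+\<omega>. F (\<lambda>n\<in>{..<k}. \<omega> (Suc n)) \<partial>(\<Pi>\<^sub>M i\<in>{1..k}. M))"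
proof -
  let ?shift = "\<lambda>\<omega>. \<lambda>n\<in>{..<k}. \<omega> (Suc n)"
  have shift: "?shift \<in> measurable (\<Pi>\<^sub>M i\<in>{1..k}. M) (\<Pi>\<^sub>M i\<in>{..<k}. M)"
    by (intro measurable_restrict measurable_component_singleton) auto
  have "distr (\<Pi>\<^sub>M i\<in>{1..k}. M) (\<Pi>\<^sub>M i\<in>{..<k}. M) ?shift = (\<Pi>\<^sub>M i\<in>{..<k}. M)"
    using distr_PiM_reindex[of "{1..k}" "\<lambda>_. M" Suc "{..<k}"] assms(1) by simp
  then show ?thesis
    using nn_integral_distr[OF shift, of F] F by simp
qed

lemma emeasure_PiM_mem_Union_balls:
  fixes p :: "'a::{metric_space, second_countable_topology} measure" and k :: nat
  assumes p: "sigma_finite_measure p" "sets p = sets borel"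
  shows "emeasure (\<Pi>\<^sub>M i\<in>{..k}. p) {\<omega> \<in> space (\<Pi>\<^sub>M i\<in>{..k}. p). \<omega> 0 \<in> (\<Union>i\<in>{1..k}. ball (\<omega> i) \<epsilon>)}
       = (\<integral>\<^sup>+f. emeasure p (\<Union>i\<in>{1..k}. ball (f i) \<epsilon>) \<partial>(\<Pi>\<^sub>M i\<in>{1..k}. p))"
    (is "emeasure _ ?E = _")
proof -
  interpret product_sigma_finite "\<lambda>_::nat. p"
    by (simp add: product_sigma_finite_def p(1))
  have ins: "{..k} = insert 0 {1..k}" by auto
  have "?E = {\<omega> \<in> space (\<Pi>\<^sub>M i\<in>{..k}. p). \<exists>i\<in>{1..k}. dist (\<omega> i) (\<omega> 0) < \<epsilon>}"
    by (auto simp: mem_ball)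
  also have "\<dots> \<in> sets (\<Pi>\<^sub>M i\<in>{..k}. p)"
    by (intro sets_Collect_Bex_dist_less) (auto simp: measurable_cong_sets[OF refl p(2), symmetric])
  finally have E: "?E \<in> sets (\<Pi>\<^sub>M i\<in>insert 0 {1..k}. p)" unfolding ins .
  have ind: "indicator ?E (f(0 := y)) = indicator (\<Union>i\<in>{1..k}. ball (f i) \<epsilon>) y"
    if "f \<in> space (\<Pi>\<^sub>M i\<in>{1..k}. p)" for f and y :: 'a
  proof -
    have "f(0 := y) \<in> space (\<Pi>\<^sub>M i\<in>{..k}. p)"
      using that sets_eq_imp_space_eq[OF p(2)] by (auto simp: space_PiM PiE_iff extensional_def)
    then show ?thesis by (auto simp: indicator_def)
  qed
  have "emeasure (\<Pi>\<^sub>M i\<in>{..k}. p) ?E = (\<integral>\<^sup>+\<omega>. indicator ?E \<omega> \<partial>(\<Pi>\<^sub>M i\<in>insert 0 {1..k}. p))"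
    using E unfolding ins by simp
  also have "\<dots> = (\<integral>\<^sup>+f. \<integral>\<^sup>+y. indicator ?E (f(0 := y)) \<partial>p \<partial>(\<Pi>\<^sub>M i\<in>{1..k}. p))"
    using E by (intro product_nn_integral_insert) auto
  also have "\<dots> = (\<integral>\<^sup>+f. emeasure p (\<Union>i\<in>{1..k}. ball (f i) \<epsilon>) \<partial>(\<Pi>\<^sub>M i\<in>{1..k}. p))"
  proof (rule nn_integral_cong)
    fix f assume "f \<in> space (\<Pi>\<^sub>M i\<in>{1..k}. p)"
    moreover have "(\<Union>i\<in>{1..k}. ball (f i) \<epsilon>) \<in> sets p" using p(2) by auto
    ultimately show "(\<integral>\<^sup>+y. indicator ?E (f(0 := y)) \<partial>p) = emeasure p (\<Union>i\<in>{1..k}. ball (f i) \<epsilon>)"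
      by (simp only: ind nn_integral_indicator)
  qed
  finally show ?thesis .
qed

lemma p_cover_eq_integral:
  fixes p :: "'a::{metric_space, second_countable_topology} measure"
  assumes p: "prob_space p" "sets p = sets borel"
  shows "p_cover p \<epsilon> k = (\<integral>f. measure p (\<Union>i<k. ball (f i) \<epsilon>) \<partial>(\<Pi>\<^sub>M i\<in>{..<k}. p))"
proof -
  interpret P: prob_space p by (rule p(1))
  interpret K: prob_space "\<Pi>\<^sub>M i\<in>{..k}. p" by (intro prob_space_PiM p(1))
  interpret N: prob_space "\<Pi>\<^sub>M i\<in>{..<k}. p" by (intro prob_space_PiM p(1))
  define h where "h I f = measure p (\<Union>i\<in>I. ball (f i) \<epsilon>)" for I and f :: "nat \<Rightarrow> 'a"
  have h_bounds: "0 \<le> h I f" "h I f \<le> 1" for I f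
    by (auto simp: h_def)
  have h_measurable: "h {..<k} \<in> borel_measurable (\<Pi>\<^sub>M i\<in>{..<k}. p)"
    unfolding h_def using p(2) P.finite_measure_axioms by (intro measurable_measure_Union_balls) auto
  have "ennreal (p_cover p \<epsilon> k)
      = emeasure (\<Pi>\<^sub>M i\<in>{..k}. p) {\<omega> \<in> space (\<Pi>\<^sub>M i\<in>{..k}. p). \<omega> 0 \<in> (\<Union>i\<in>{1..k}. ball (\<omega> i) \<epsilon>)}"
    unfolding p_cover_def by (simp add: K.emeasure_eq_measure)
  also have "\<dots> = (\<integral>\<^sup>+f. ennreal (h {1..k} f) \<partial>(\<Pi>\<^sub>M i\<in>{1..k}. p))"
    unfolding emeasure_PiM_mem_Union_balls[OF P.sigma_finite_measure_axioms p(2)] h_def by (simp add: P.emeasure_eq_measure)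
  also have "\<dots> = (\<integral>\<^sup>+f. ennreal (h {..<k} f) \<partial>(\<Pi>\<^sub>M i\<in>{..<k}. p))"
    using nn_integral_PiM_shift[OF p(1), of "\<lambda>f. ennreal (h {..<k} f)"] h_measurable
    unfolding h_def image_Suc_lessThan[symmetric] by simp
  also have "\<dots> = ennreal (\<integral>f. h {..<k} f \<partial>(\<Pi>\<^sub>M i\<in>{..<k}. p))"
    using h_measurable h_bounds
    by (intro nn_integral_eq_integral N.integrable_const_bound[where B=1]) auto
  finally have "ennreal (p_cover p \<epsilon> k) = ennreal (\<integral>f. h {..<k} f \<partial>(\<Pi>\<^sub>M i\<in>{..<k}. p))" .
  moreover have "0 \<le> p_cover p \<epsilon> k" "0 \<le> (\<integral>f. h {..<k} f \<partial>(\<Pi>\<^sub>M i\<in>{..<k}. p))"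
    using h_bounds by (auto simp: p_cover_def)
  ultimately show ?thesis
    unfolding h_def by simp
qed

lemma (in prob_space) distr_PiM_indep_vars:
  assumes indep: "indep_vars M' X I" and rv: "\<And>i. i \<in> I \<Longrightarrow> random_variable (M' i) (X i)"
  shows "distr M (\<Pi>\<^sub>M i\<in>I. distr M (M' i) (X i)) (\<lambda>\<omega>. \<lambda>i\<in>I. X i \<omega>) = (\<Pi>\<^sub>M i\<in>I. distr M (M' i) (X i))"
proof (cases "I = {}")
  case True
  show ?thesis
    unfolding True PiM_empty
    by (rule measure_eqI) (auto simp: emeasure_distr subset_singleton_iff emeasure_space_1 restrict_def)
next
  case False
  have "sets (\<Pi>\<^sub>M i\<in>I. distr M (M' i) (X i)) = sets (\<Pi>\<^sub>M i\<in>I. M' i)"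
    by (intro sets_PiM_cong) auto
  then have "distr M (\<Pi>\<^sub>M i\<in>I. distr M (M' i) (X i)) (\<lambda>\<omega>. \<lambda>i\<in>I. X i \<omega>)
           = distr M (\<Pi>\<^sub>M i\<in>I. M' i) (\<lambda>\<omega>. \<lambda>i\<in>I. X i \<omega>)"
    by (intro distr_cong) auto
  also have "\<dots> = (\<Pi>\<^sub>M i\<in>I. distr M (M' i) (X i))"
    using indep_vars_iff_distr_eq_PiM'[OF False rv] indep by simp
  finally show ?thesis .
qed

lemma (in prob_space) integral_measure_Union_balls_iid:
  fixes p :: "'c::{metric_space, second_countable_topology} measure" and X :: "nat \<Rightarrow> 'a \<Rightarrow> 'c"
  assumes p: "prob_space p" "sets p = sets borel"
    and X_meas: "\<And>i. i < k \<Longrightarrow> random_variable borel (X i)"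
    and X_indep: "indep_vars (\<lambda>_. borel) X {..<k}"
    and X_law: "\<And>i. i < k \<Longrightarrow> distr M borel (X i) = p"
  shows "(\<lambda>\<omega>. measure p (\<Union>i<k. ball (X i \<omega>) \<epsilon>)) \<in> borel_measurable M"
    and "(\<integral>\<omega>. measure p (\<Union>i<k. ball (X i \<omega>) \<epsilon>) \<partial>M) = p_cover p \<epsilon> k"
proof -
  define N where "N = (\<Pi>\<^sub>M i\<in>{..<k}. p)"
  define Z where "Z \<omega> = (\<lambda>i\<in>{..<k}. X i \<omega>)" for \<omega>
  define h where "h f = measure p (\<Union>i<k. ball (f i) \<epsilon>)" for f :: "nat \<Rightarrow> 'c"
  have h_Z: "h (Z \<omega>) = measure p (\<Union>i<k. ball (X i \<omega>) \<epsilon>)" for \<omega>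
    by (simp add: h_def Z_def)
  have h_measurable: "h \<in> borel_measurable N"
    unfolding h_def N_def using p by (intro measurable_measure_Union_balls prob_space.finite_measure) auto
  have Z_measurable: "Z \<in> measurable M N"
    unfolding Z_def N_def using X_meas measurable_cong_sets[OF refl p(2)]
    by (intro measurable_restrict) auto
  have "(\<Pi>\<^sub>M i\<in>{..<k}. distr M borel (X i)) = N"
    unfolding N_def using X_law by (intro PiM_cong) auto
  then have law: "distr M N Z = N"
    using distr_PiM_indep_vars[OF X_indep] X_meas unfolding Z_def by simp
  show "(\<lambda>\<omega>. measure p (\<Union>i<k. ball (X i \<omega>) \<epsilon>)) \<in> borel_measurable M"
    using measurable_comp[OF Z_measurable h_measurable] by (simp add: comp_def h_Z)
  have "(\<integral>\<omega>. measure p (\<Union>i<k. ball (X i \<omega>) \<epsilon>) \<partial>M) = (\<integral>\<omega>. h (Z \<omega>) \<partial>M)"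
    by (simp add: h_Z)
  also have "\<dots> = (\<integral>f. h f \<partial>N)"
    using integral_distr[OF Z_measurable h_measurable] law by simp
  also have "\<dots> = p_cover p \<epsilon> k"
    unfolding N_def h_def by (rule p_cover_eq_integral[OF p, symmetric])
  finally show "(\<integral>\<omega>. measure p (\<Union>i<k. ball (X i \<omega>) \<epsilon>) \<partial>M) = p_cover p \<epsilon> k" .
qed

theorem lemma3p11:
  fixes p :: "'a::polish_space measure"
    and M :: "'b measure"
    and X :: "nat \<Rightarrow> 'b \<Rightarrow> 'a"
    and C :: "'b \<Rightarrow> nat \<Rightarrow> 'a set"
    and \<epsilon> :: real and k :: nat
  assumes p_prob: "prob_space p" and p_borel: "sets p = sets borel"
    and M_prob: "prob_space M"
    and eps: "\<epsilon> > 0"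
    and X_meas: "\<And>i. i < k \<Longrightarrow> X i \<in> measurable M borel"
    and X_indep: "prob_space.indep_vars M (\<lambda>_. borel) X {..<k}"
    and X_law: "\<And>i. i < k \<Longrightarrow> distr M borel (X i) = p"
    and C_sets: "\<And>\<omega> i. \<omega> \<in> space M \<Longrightarrow> i < k \<Longrightarrow> C \<omega> i \<in> sets borel"
    and C_disj: "\<And>\<omega> i j. \<omega> \<in> space M \<Longrightarrow> i < k \<Longrightarrow> j < k \<Longrightarrow> i \<noteq> j \<Longrightarrow> C \<omega> i \<inter> C \<omega> j = {}"
    and C_sub: "\<And>\<omega> i. \<omega> \<in> space M \<Longrightarrow> i < k \<Longrightarrow> C \<omega> i \<subseteq> ball (X i \<omega>) \<epsilon>"
    and C_union: "\<And>\<omega>. \<omega> \<in> space M \<Longrightarrow> (\<Union>i<k. C \<omega> i) = (\<Union>i<k. ball (X i \<omega>) \<epsilon>)"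
  shows "(\<integral>\<^sup>+ \<omega>. ennreal (d_BL p
            (weighted_diracs k
               (\<lambda>i. measure p (C \<omega> i) / (\<Sum>j<k. measure p (C \<omega> j)))
               (\<lambda>i. X i \<omega>))) \<partial>M)
         \<le> ennreal (\<epsilon> * p_cover p \<epsilon> k + 2 * (1 - p_cover p \<epsilon> k))"
proof -
  interpret M: prob_space M by (rule M_prob)
  define H where "H \<omega> = measure p (\<Union>i<k. ball (X i \<omega>) \<epsilon>)" for \<omega>
  have H_measurable: "H \<in> borel_measurable M" and H_integral: "(\<integral>\<omega>. H \<omega> \<partial>M) = p_cover p \<epsilon> k"
    unfolding H_def using M.integral_measure_Union_balls_iid[OF p_prob p_borel X_meas X_indep X_law] by auto
  have H_bounds: "0 \<le> H \<omega>" "H \<omega> \<le> 1" for \<omega>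
    by (auto simp: H_def prob_space.prob_le_1[OF p_prob])
  have H_int: "integrable M H"
    using H_measurable H_bounds by (intro M.integrable_const_bound[where B=1]) auto
  have "d_BL p (weighted_diracs k (\<lambda>i. measure p (C \<omega> i) / (\<Sum>j<k. measure p (C \<omega> j))) (\<lambda>i. X i \<omega>))
        \<le> \<epsilon> * H \<omega> + 2 * (1 - H \<omega>)" if "\<omega> \<in> space M" for \<omega>
    using d_BL_weighted_diracs_le[OF p_prob p_borel, where k=k and C="C \<omega>" and x="\<lambda>i. X i \<omega>",
        OF C_sets[OF that] C_disj[OF that] C_sub[OF that]]
    unfolding H_def C_union[OF that] .
  then have "(\<integral>\<^sup>+ \<omega>. ennreal (d_BL p (weighted_diracs k
                 (\<lambda>i. measure p (C \<omega> i) / (\<Sum>j<k. measure p (C \<omega> j))) (\<lambda>i. X i \<omega>))) \<partial>M)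
             \<le> (\<integral>\<^sup>+ \<omega>. ennreal (\<epsilon> * H \<omega> + 2 * (1 - H \<omega>)) \<partial>M)"
    by (intro nn_integral_mono ennreal_leI)
  also have "\<dots> = ennreal (\<integral>\<omega>. \<epsilon> * H \<omega> + 2 * (1 - H \<omega>) \<partial>M)"
    using H_int H_bounds eps by (intro nn_integral_eq_integral) auto
  also have "(\<integral>\<omega>. \<epsilon> * H \<omega> + 2 * (1 - H \<omega>) \<partial>M) = \<epsilon> * p_cover p \<epsilon> k + 2 * (1 - p_cover p \<epsilon> k)"
    using H_int H_integral by (simp add: M.prob_space)
  finally show ?thesis .
qed

end
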